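(* Let $w$ be a word and let $v_x, v_y$ be vertices of the graph $G(w)$ with $\mathrm{dist}(v_x, v_y) = d$ in $G(w)$. Then $|\pi_{\{x\}}(w)| - d \le |\pi_{\{y\}}(w)| \le |\pi_{\{x\}}(w)| + d$.
   Context: For a set of symbols $\mathcal S$, $\pi_{\mathcal S}(w)$ is the subsequence of $w$ consisting of all occurrences of symbols in $\mathcal S$; $|\pi_{\{x\}}(w)|$ is the number of occurrences of $x$ in $w$. Symbols $x,y$ alternate in $w$ if $\pi_{\{x,y\}}(w) \in \{(xy)^k, (xy)^kx, (yx)^k, (yx)^ky : k \ge 0\}$. $G(w)$ has one vertex $v_a$ per symbol $a$ of the alphabet and undirected edge $(v_x,v_y)$ iff $x \neq y$ alternate in $w$; $\mathrm{dist}$ is the shortest-path distance in $G(w)$. *)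

theory Defs
  imports Main "HOL-Library.Extended_Nat"
begin

definition proj :: "'a set \<Rightarrow> 'a list \<Rightarrow> 'a list" where
  "proj S w = filter (\<lambda>c. c \<in> S) w"

definition alternate :: "'a list \<Rightarrow> 'a \<Rightarrow> 'a \<Rightarrow> bool" where
  "alternate w x y \<longleftrightarrow> (\<exists>k. proj {x, y} w = concat (replicate k [x, y])
      \<or> proj {x, y} w = concat (replicate k [x, y]) @ [x]
      \<or> proj {x, y} w = concat (replicate k [y, x])
      \<or> proj {x, y} w = concat (replicate k [y, x]) @ [y])"

definition gedge :: "'a list \<Rightarrow> 'a \<Rightarrow> 'a \<Rightarrow> bool" where
  "gedge w x y \<longleftrightarrow> x \<noteq> y \<and> alternate w x y"

definition walk_len :: "'a set \<Rightarrow> 'a list \<Rightarrow> 'a \<Rightarrow> 'a \<Rightarrow> nat \<Rightarrow> bool" where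
  "walk_len A w x y n \<longleftrightarrow> (\<exists>ps. length ps = Suc n \<and> hd ps = x \<and> last ps = y \<and> set ps \<subseteq> A
      \<and> (\<forall>i<n. gedge w (ps ! i) (ps ! Suc i)))"

definition gdist :: "'a set \<Rightarrow> 'a list \<Rightarrow> 'a \<Rightarrow> 'a \<Rightarrow> enat" where
  "gdist A w x y = (if \<exists>n. walk_len A w x y n then enat (LEAST n. walk_len A w x y n) else \<infinity>)"

end

theory Submission
  imports Defs
begin

(* Along an edge of G(w) the two symbols alternate, so their numbers of occurrences differ by at
   most one; summing along a shortest path of length d bounds the difference for x and y by d. *)

lemma proj_proj: "proj T (proj S w) = proj (S \<inter> T) w"
  unfolding proj_def by (simp add: conj_commute)

lemma proj_append: "proj S (xs @ ys) = proj S xs @ proj S ys"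
  unfolding proj_def by simp

lemma length_proj_concat_replicate:
  assumes "x \<noteq> y" and "a \<in> {x, y}"
  shows "length (proj {a} (concat (replicate k [x, y]))) = k"
  using assms unfolding proj_def by (induction k) auto

lemma gedge_length_proj_diff:
  assumes "gedge w x y"
  shows "\<bar>int (length (proj {x} w)) - int (length (proj {y} w))\<bar> \<le> 1"
proof -
  have "x \<noteq> y" and "alternate w x y"
    using assms unfolding gedge_def by auto
  then obtain k where k: "proj {x, y} w = concat (replicate k [x, y])
      \<or> proj {x, y} w = concat (replicate k [x, y]) @ [x]
      \<or> proj {x, y} w = concat (replicate k [y, x])
      \<or> proj {x, y} w = concat (replicate k [y, x]) @ [y]"
    unfolding alternate_def by blast
  have "proj {x} w = proj {x} (proj {x, y} w)" "proj {y} w = proj {y} (proj {x, y} w)"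
    by (simp_all add: proj_proj insert_absorb)
  moreover have "proj {x} [y] = []" "proj {y} [x] = []" "proj {x} [x] = [x]" "proj {y} [y] = [y]"
    using \<open>x \<noteq> y\<close> by (simp_all add: proj_def)
  moreover note length_proj_concat_replicate[OF \<open>x \<noteq> y\<close>]
    length_proj_concat_replicate[OF \<open>x \<noteq> y\<close>[symmetric]]
  ultimately show ?thesis
    using k by (elim disjE) (simp_all add: proj_append)
qed

lemma chain_diff_le:
  fixes f :: "'b \<Rightarrow> int"
  assumes "\<forall>i<n. \<bar>f (ps ! i) - f (ps ! Suc i)\<bar> \<le> 1"
  shows "\<bar>f (ps ! 0) - f (ps ! n)\<bar> \<le> int n"
proof -
  have "f (ps ! 0) - f (ps ! n) = (\<Sum>i<n. f (ps ! i) - f (ps ! Suc i))"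
    using sum_lessThan_telescope'[of "\<lambda>i. f (ps ! i)" n] by simp
  also have "\<bar>\<dots>\<bar> \<le> (\<Sum>i<n. \<bar>f (ps ! i) - f (ps ! Suc i)\<bar>)"
    by (rule sum_abs)
  also have "\<dots> \<le> (\<Sum>i<n. 1)"
    using assms by (intro sum_mono) auto
  finally show ?thesis by simp
qed

lemma walk_len_length_proj_diff:
  assumes "walk_len A w x y n"
  shows "\<bar>int (length (proj {x} w)) - int (length (proj {y} w))\<bar> \<le> int n"
proof -
  obtain ps where ps: "length ps = Suc n" "hd ps = x" "last ps = y"
      and edges: "\<forall>i<n. gedge w (ps ! i) (ps ! Suc i)"
    using assms unfolding walk_len_def by blast
  have "ps \<noteq> []"
    using ps(1) by auto
  then have "ps ! 0 = x" "ps ! n = y"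
    using hd_conv_nth last_conv_nth ps by fastforce+
  moreover have "\<forall>i<n. \<bar>int (length (proj {ps ! i} w)) - int (length (proj {ps ! Suc i} w))\<bar> \<le> 1"
    using edges by (simp add: gedge_length_proj_diff)
  ultimately show ?thesis
    using chain_diff_le[of n "\<lambda>a. int (length (proj {a} w))" ps] by simp
qed

lemma gdist_enat_walk_len:
  assumes "gdist A w x y = enat d"
  shows "walk_len A w x y d"
proof -
  have "\<exists>n. walk_len A w x y n" and "d = (LEAST n. walk_len A w x y n)"
    using assms unfolding gdist_def by (auto split: if_splits)
  then show ?thesis by (metis LeastI_ex)
qed

theorem lemma6:
  fixes A :: "'a set" and w :: "'a list" and x y :: 'a and d :: nat
  assumes "set w \<subseteq> A" and "x \<in> A" and "y \<in> A"
    and "gdist A w x y = enat d"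
  shows "int (length (proj {x} w)) - int d \<le> int (length (proj {y} w))
    \<and> int (length (proj {y} w)) \<le> int (length (proj {x} w)) + int d"
  using walk_len_length_proj_diff[OF gdist_enat_walk_len[OF assms(4)]] by (simp add: abs_le_iff)

end
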